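(* Let $n\ge1$ and $a_1,\dots,a_n,b_1,\dots,b_n>0$. Put $S_a=\sum_{j=1}^n a_j^2$, $S_b=\sum_{j=1}^n b_j^2$, $$A=\frac{1}{8}\sqrt{S_aS_b}\cdot \sum_{i=1}^n \left(\frac{a_i^2}{S_a}-\frac{b_i^2}{S_b}\right)^2,$$ $$m=\min_{1\le i\le n}\min\left\{\frac{a_i^2}{S_a},\frac{b_i^2}{S_b}\right\},\qquad M=\max_{1\le i\le n}\max\left\{\frac{a_i^2}{S_a},\frac{b_i^2}{S_b}\right\}.$$ Then $$\frac{A^2}{M^2}+\frac{2A}{M}\sum_{i=1}^n a_ib_i\leq S_aS_b-\left(\sum_{i=1}^n a_ib_i\right)^2\leq \frac{A^2}{m^2}+\frac{2A}{m}\sum_{i=1}^n a_i b_i .$$ *)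

theory Defs
  imports Complex_Main
begin

end

theory Submission
  imports Defs
begin

(*
  Normalise the two vectors: x_i = a_i / sqrt S_a and y_i = b_i / sqrt S_b
  are positive unit vectors, and with P = sqrt (S_a S_b), t = 1/8 * sum (x_i^2 - y_i^2)^2 and
  c = sum x_i y_i we have A = P t, sum a_i b_i = P c and S_a S_b - (sum a_i b_i)^2 = P^2 (1 - c^2).
  The two bounds therefore reduce to the normalised statement
      (t/M)^2 + 2 (t/M) c  <=  1 - c^2  <=  (t/m)^2 + 2 (t/m) c.
  For unit vectors 1 - c = 1/2 * sum (x_i - y_i)^2, and termwise
      4 m (x_i - y_i)^2 <= (x_i^2 - y_i^2)^2 = (x_i - y_i)^2 (x_i + y_i)^2 <= 4 M (x_i - y_i)^2,
  so m (1 - c) <= t <= M (1 - c); the normalised statement then follows from 0 <= c <= 1 by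
  an elementary quadratic estimate.
*)

text \<open>Termwise estimate: the factor (x + y)^2 in x^2 - y^2 = (x - y)(x + y) lies between
  4 min(x^2, y^2) and 4 max(x^2, y^2).\<close>

lemma sq_diff_sq_bounds:
  fixes x y m M :: real
  assumes "x > 0" "y > 0" "m \<le> min (x^2) (y^2)" "max (x^2) (y^2) \<le> M"
  shows "4 * m * (x - y)^2 \<le> (x^2 - y^2)^2" and "(x^2 - y^2)^2 \<le> 4 * M * (x - y)^2"
proof -
  have factor: "(x^2 - y^2)^2 = (x - y)^2 * (x + y)^2"
    by (simp add: power2_eq_square algebra_simps)
  have "(2 * min x y)^2 \<le> (x + y)^2" and "(x + y)^2 \<le> (2 * max x y)^2"
    using assms(1,2) by (intro power_mono; simp add: min_def max_def)+
  moreover have "min (x^2) (y^2) = (min x y)^2" and "max (x^2) (y^2) = (max x y)^2"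
    using assms(1,2) by (auto simp: min_def max_def power_mono)
  ultimately have "4 * m \<le> (x + y)^2" and "(x + y)^2 \<le> 4 * M"
    using assms(3,4) by (simp_all add: power_mult_distrib)
  then have "4 * m * (x - y)^2 \<le> (x + y)^2 * (x - y)^2"
    and "(x + y)^2 * (x - y)^2 \<le> 4 * M * (x - y)^2"
    by (simp_all add: mult_right_mono)
  then show "4 * m * (x - y)^2 \<le> (x^2 - y^2)^2" and "(x^2 - y^2)^2 \<le> 4 * M * (x - y)^2"
    unfolding factor by (simp_all add: mult.commute)
qed

lemma unit_inner_deficit:
  fixes x y :: "'i \<Rightarrow> real"
  assumes "(\<Sum>i\<in>I. x i ^ 2) = 1" "(\<Sum>i\<in>I. y i ^ 2) = 1"
  shows "1 - (\<Sum>i\<in>I. x i * y i) = 1/2 * (\<Sum>i\<in>I. (x i - y i)^2)"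
proof -
  have "(\<Sum>i\<in>I. (x i - y i)^2) = (\<Sum>i\<in>I. x i ^ 2) + (\<Sum>i\<in>I. y i ^ 2) - 2 * (\<Sum>i\<in>I. x i * y i)"
    by (simp add: power2_diff sum.distrib sum_subtractf sum_distrib_left mult.assoc)
  then show ?thesis using assms by simp
qed

lemma deviation_bounds:
  fixes x y :: "'i \<Rightarrow> real"
  assumes pos: "\<And>i. i \<in> I \<Longrightarrow> x i > 0 \<and> y i > 0"
    and unit: "(\<Sum>i\<in>I. x i ^ 2) = 1" "(\<Sum>i\<in>I. y i ^ 2) = 1"
    and range: "\<And>i. i \<in> I \<Longrightarrow> m \<le> min (x i ^ 2) (y i ^ 2) \<and> max (x i ^ 2) (y i ^ 2) \<le> M"
  shows "m * (1 - (\<Sum>i\<in>I. x i * y i)) \<le> 1/8 * (\<Sum>i\<in>I. (x i ^ 2 - y i ^ 2)^2)"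
    and "1/8 * (\<Sum>i\<in>I. (x i ^ 2 - y i ^ 2)^2) \<le> M * (1 - (\<Sum>i\<in>I. x i * y i))"
proof -
  note terms = sq_diff_sq_bounds[OF conjunct1[OF pos] conjunct2[OF pos]
                                    conjunct1[OF range] conjunct2[OF range]]
  have "(\<Sum>i\<in>I. 4 * m * (x i - y i)^2) \<le> (\<Sum>i\<in>I. (x i ^ 2 - y i ^ 2)^2)"
    and "(\<Sum>i\<in>I. (x i ^ 2 - y i ^ 2)^2) \<le> (\<Sum>i\<in>I. 4 * M * (x i - y i)^2)"
    using terms by (auto intro: sum_mono)
  then show "m * (1 - (\<Sum>i\<in>I. x i * y i)) \<le> 1/8 * (\<Sum>i\<in>I. (x i ^ 2 - y i ^ 2)^2)"
    and "1/8 * (\<Sum>i\<in>I. (x i ^ 2 - y i ^ 2)^2) \<le> M * (1 - (\<Sum>i\<in>I. x i * y i))"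
    unfolding unit_inner_deficit[OF unit] by (simp_all add: sum_distrib_left[symmetric])
qed

text \<open>The quadratic estimate: if u bounds 1 - c from above (resp. v from below) then
  u^2 + 2uc bounds 1 - c^2 = (1 - c)^2 + 2(1 - c)c in the same direction.\<close>

lemma quadratic_lower:
  fixes u c :: real
  assumes "1 - c \<le> u" "0 \<le> c" "c \<le> 1"
  shows "1 - c^2 \<le> u^2 + 2 * u * c"
proof -
  have "(1 - c)^2 \<le> u^2" using assms by (intro power_mono) auto
  moreover have "2 * (1 - c) * c \<le> 2 * u * c" using assms by (intro mult_right_mono) auto
  ultimately show ?thesis by (simp add: power2_eq_square algebra_simps)
qed

lemma quadratic_upper:
  fixes v c :: real
  assumes "v \<le> 1 - c" "0 \<le> c" "0 \<le> v"
  shows "v^2 + 2 * v * c \<le> 1 - c^2"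
proof -
  have "v^2 \<le> (1 - c)^2" using assms by (intro power_mono) auto
  moreover have "2 * v * c \<le> 2 * (1 - c) * c" using assms by (intro mult_right_mono) auto
  ultimately show ?thesis by (simp add: power2_eq_square algebra_simps)
qed

theorem normalised_bounds:
  fixes x y :: "'i \<Rightarrow> real"
  assumes pos: "\<And>i. i \<in> I \<Longrightarrow> x i > 0 \<and> y i > 0"
    and unit: "(\<Sum>i\<in>I. x i ^ 2) = 1" "(\<Sum>i\<in>I. y i ^ 2) = 1"
    and range: "\<And>i. i \<in> I \<Longrightarrow> m \<le> min (x i ^ 2) (y i ^ 2) \<and> max (x i ^ 2) (y i ^ 2) \<le> M"
    and "m > 0"
  defines "t \<equiv> 1/8 * (\<Sum>i\<in>I. (x i ^ 2 - y i ^ 2)^2)" and "c \<equiv> \<Sum>i\<in>I. x i * y i"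
  shows "(t/M)^2 + 2 * (t/M) * c \<le> 1 - c^2 \<and> 1 - c^2 \<le> (t/m)^2 + 2 * (t/m) * c"
proof -
  obtain j where "j \<in> I" using unit(1) by fastforce
  then have "M > 0" using range[of j] \<open>m > 0\<close> by auto
  have lo: "m * (1 - c) \<le> t" and hi: "t \<le> M * (1 - c)"
    unfolding t_def c_def using deviation_bounds[OF pos unit range] by auto
  have "c \<ge> 0" unfolding c_def
    by (rule sum_nonneg) (use pos in \<open>fastforce intro: less_imp_le\<close>)
  moreover have "c \<le> 1"
    using unit_inner_deficit[OF unit] sum_nonneg[of I "\<lambda>i. (x i - y i)^2"]
    unfolding c_def by simp
  moreover have "t \<ge> 0" unfolding t_def by (simp add: sum_nonneg)
  ultimately show ?thesis
    using quadratic_upper[of "t/M" c] quadratic_lower[of c "t/m"] lo hi \<open>M > 0\<close> \<open>m > 0\<close>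
    by (simp add: pos_divide_le_eq pos_le_divide_eq mult.commute)
qed

lemma normalise_vector:
  fixes a :: "'i \<Rightarrow> real"
  assumes "finite I" "I \<noteq> {}" "\<And>i. i \<in> I \<Longrightarrow> a i > 0"
    and S: "S = (\<Sum>i\<in>I. a i ^ 2)"
  shows "S > 0" and "\<And>i. i \<in> I \<Longrightarrow> a i / sqrt S > 0"
    and "\<And>i. (a i / sqrt S)^2 = a i ^ 2 / S" and "(\<Sum>i\<in>I. (a i / sqrt S)^2) = 1"
proof -
  show "S > 0" unfolding S by (rule sum_pos) (use assms in \<open>fastforce+\<close>)
  then show "\<And>i. i \<in> I \<Longrightarrow> a i / sqrt S > 0" and sq: "\<And>i. (a i / sqrt S)^2 = a i ^ 2 / S"
    using assms(3) by (simp_all add: power_divide)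
  show "(\<Sum>i\<in>I. (a i / sqrt S)^2) = 1"
    unfolding sq using \<open>S > 0\<close> by (simp add: sum_divide_distrib[symmetric] S)
qed

lemma rescale_bound:
  fixes P t c \<mu> :: real
  shows "(P * t)^2 / \<mu>^2 + 2 * (P * t) / \<mu> * (P * c) = P^2 * ((t/\<mu>)^2 + 2 * (t/\<mu>) * c)"
  by (simp add: power2_eq_square field_simps)

theorem mainTheorem4:
  fixes n :: nat and a b :: "nat \<Rightarrow> real" and Sa Sb A m M :: real
  assumes "n \<ge> 1"
    and "\<And>i. i \<in> {1..n} \<Longrightarrow> a i > 0"
    and "\<And>i. i \<in> {1..n} \<Longrightarrow> b i > 0"
    and "Sa = (\<Sum>j=1..n. (a j)^2)"
    and "Sb = (\<Sum>j=1..n. (b j)^2)"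
    and "A = 1/8 * sqrt (Sa * Sb) * (\<Sum>i=1..n. ((a i)^2 / Sa - (b i)^2 / Sb)^2)"
    and "m = Min ((\<lambda>i. min ((a i)^2 / Sa) ((b i)^2 / Sb)) ` {1..n})"
    and "M = Max ((\<lambda>i. max ((a i)^2 / Sa) ((b i)^2 / Sb)) ` {1..n})"
  shows "A^2 / M^2 + 2 * A / M * (\<Sum>i=1..n. a i * b i) \<le> Sa * Sb - (\<Sum>i=1..n. a i * b i)^2
     \<and> Sa * Sb - (\<Sum>i=1..n. a i * b i)^2 \<le> A^2 / m^2 + 2 * A / m * (\<Sum>i=1..n. a i * b i)"
proof -
  have I: "finite {1..n}" "{1..n} \<noteq> {}" using assms(1) by auto
  note na = normalise_vector[OF I assms(2,4)] and nb = normalise_vector[OF I assms(3,5)]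
  define x where "x i = a i / sqrt Sa" for i
  define y where "y i = b i / sqrt Sb" for i
  define P where "P = sqrt (Sa * Sb)"
  have x2: "x i ^ 2 = a i ^ 2 / Sa" and y2: "y i ^ 2 = b i ^ 2 / Sb" for i
    unfolding x_def y_def using na(3) nb(3) by blast+
  define t where "t = 1/8 * (\<Sum>i=1..n. (x i ^ 2 - y i ^ 2)^2)"
  define c where "c = (\<Sum>i=1..n. x i * y i)"
  have "P > 0" unfolding P_def using na(1) nb(1) by simp
  have A: "A = P * t"
    unfolding assms(6) P_def t_def x2 y2 by simp
  have S: "(\<Sum>i=1..n. a i * b i) = P * c"
    unfolding P_def c_def x_def y_def using na(1) nb(1)
    by (simp add: real_sqrt_mult sum_distrib_left)
  have SaSb: "Sa * Sb - (P * c)^2 = P^2 * (1 - c^2)"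
    unfolding P_def using na(1) nb(1) by (simp add: power_mult_distrib algebra_simps)
  have "m > 0" unfolding assms(7) using I na(1) nb(1) assms(2,3)
    by (force simp: Min_gr_iff)
  moreover have "m \<le> min (x i ^ 2) (y i ^ 2) \<and> max (x i ^ 2) (y i ^ 2) \<le> M" if "i \<in> {1..n}" for i
    unfolding assms(7,8) x2 y2 using that I
    by (intro conjI Min_le Max_ge) auto
  ultimately have "(t/M)^2 + 2 * (t/M) * c \<le> 1 - c^2 \<and> 1 - c^2 \<le> (t/m)^2 + 2 * (t/m) * c"
    unfolding t_def c_def using na(2,4) nb(2,4)
    by (intro normalised_bounds) (auto simp: x_def y_def)
  then show ?thesis
    unfolding S A SaSb rescale_bound using \<open>P > 0\<close> by (simp add: mult_left_mono)
qed

end
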